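(* Let $m,n\ge1$, $a\in(0,\infty)^m$, $b\in(0,\infty)^n$, and let $\Omega$ be a real $m\times n$ matrix. Let $(A,B)_0$ be an arbitrary point in the interior of $\tilde{\mathcal A}$, and define recursively $(A,B)_{k+1}=T_2(T_1((A,B)_k))$. Then $$\lim_{k\to\infty}F((A,B)_k)=\max_{(A,B)\in\tilde{\mathcal A}}F(A,B).$$
   Context: $\mathcal A$ is the set of pairs $(A,B)$ of $(m+1)\times(n+1)$ real matrices (indices $i=0,\dots,m$, $j=0,\dots,n$) with: $A_{ij},B_{ij}\ge0$; $a_i=\sum_{j=0}^nA_{ij}$ for $i=1,\dots,m$; $A_{0j}=0$ for all $j$; $b_j=\sum_{i=0}^mB_{ij}$ for $j=1,\dots,n$; $B_{i0}=0$ for all $i$. $F(A,B)=\sum_{i=1}^m\sum_{j=1}^n\sqrt{A_{ij}B_{ij}}\,\Omega_{ij}$. $\tilde{\mathcal A}\subset\mathcal A$ consists of those $(A,B)$ with: (1) $A_{ij}=B_{ij}=0$ whenever $i,j\ge1$ and $\Omega_{ij}\le0$; (2) for $j\ge1$, $B_{0j}=0$ if there is $i\ge1$ with $\Omega_{ij}>0$; (3) for $i\ge1$, $A_{i0}=0$ if there is $j\ge1$ with $\Omega_{ij}>0$. $T_1(A,B)=(E,B)$ where $E_{ij}=A_{ij}$ if $i=0$ or $j=0$, and otherwise $E_{ij}=a_iB_{ij}\Omega_{ij}^2/\sum_{k=1}^nB_{ik}\Omega_{ik}^2$ if this denominator is positive and $E_{ij}=0$ otherwise. $T_2(A,B)=(A,E)$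 where $E_{ij}=B_{ij}$ if $i=0$ or $j=0$, and otherwise $E_{ij}=b_jA_{ij}\Omega_{ij}^2/\sum_{k=1}^mA_{kj}\Omega_{kj}^2$ if this denominator is positive and $E_{ij}=0$ otherwise. "Interior" refers to the interior of the convex set $\tilde{\mathcal A}$ (relative to the affine space it spans). *)

theory Defs
  imports "HOL-Analysis.Analysis"
begin

text \<open>Index conventions: rows of A,B are indexed by 'm option, columns by 'n option;
  None plays the role of the index 0, Some i the indices 1..m (resp. 1..n).
  a :: real^'m, b :: real^'n, Omega :: real^'n^'m (an m x n matrix).\<close>

type_synonym ('m,'n) mat0 = "real ^ 'n option ^ 'm option"

definition Aset :: "real ^ 'm::finite \<Rightarrow> real ^ 'n::finite \<Rightarrow> (('m,'n) mat0 \<times> ('m,'n) mat0) set" where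
  "Aset a b = {(A, B).
     (\<forall>i j. A $ i $ j \<ge> 0 \<and> B $ i $ j \<ge> 0) \<and>
     (\<forall>i. a $ i = (\<Sum>j\<in>UNIV. A $ Some i $ j)) \<and>
     (\<forall>j. A $ None $ j = 0) \<and>
     (\<forall>j. b $ j = (\<Sum>i\<in>UNIV. B $ i $ Some j)) \<and>
     (\<forall>i. B $ i $ None = 0)}"

definition Fobj :: "real ^ 'n::finite ^ 'm::finite \<Rightarrow> ('m,'n) mat0 \<times> ('m,'n) mat0 \<Rightarrow> real" where
  "Fobj Omega p = (case p of (A, B) \<Rightarrow>
     (\<Sum>i\<in>UNIV. \<Sum>j\<in>UNIV. sqrt (A $ Some i $ Some j * B $ Some i $ Some j) * Omega $ i $ j))"

definition Atilde :: "real ^ 'm::finite \<Rightarrow> real ^ 'n::finite \<Rightarrow> real ^ 'n ^ 'm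
     \<Rightarrow> (('m,'n) mat0 \<times> ('m,'n) mat0) set" where
  "Atilde a b Omega = {(A, B) \<in> Aset a b.
     (\<forall>i j. Omega $ i $ j \<le> 0 \<longrightarrow> A $ Some i $ Some j = 0 \<and> B $ Some i $ Some j = 0) \<and>
     (\<forall>j. (\<exists>i. Omega $ i $ j > 0) \<longrightarrow> B $ None $ Some j = 0) \<and>
     (\<forall>i. (\<exists>j. Omega $ i $ j > 0) \<longrightarrow> A $ Some i $ None = 0)}"

definition T1 :: "real ^ 'm::finite \<Rightarrow> real ^ 'n::finite ^ 'm
     \<Rightarrow> ('m,'n) mat0 \<times> ('m,'n) mat0 \<Rightarrow> ('m,'n) mat0 \<times> ('m,'n) mat0" where
  "T1 a Omega p = (case p of (A, B) \<Rightarrow>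
     ((\<chi> i j. (case (i, j) of
         (Some i', Some j') \<Rightarrow>
            (let d = (\<Sum>k\<in>UNIV. B $ Some i' $ Some k * (Omega $ i' $ k)\<^sup>2) in
             if d > 0 then a $ i' * B $ Some i' $ Some j' * (Omega $ i' $ j')\<^sup>2 / d else 0)
       | _ \<Rightarrow> A $ i $ j)), B))"

definition T2 :: "real ^ 'n::finite \<Rightarrow> real ^ 'n ^ 'm::finite
     \<Rightarrow> ('m,'n) mat0 \<times> ('m,'n) mat0 \<Rightarrow> ('m,'n) mat0 \<times> ('m,'n) mat0" where
  "T2 b Omega p = (case p of (A, B) \<Rightarrow>
     (A, (\<chi> i j. (case (i, j) of
         (Some i', Some j') \<Rightarrow>
            (let d = (\<Sum>k\<in>UNIV. A $ Some k $ Some j' * (Omega $ k $ j')\<^sup>2) in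
             if d > 0 then b $ j' * A $ Some i' $ Some j' * (Omega $ i' $ j')\<^sup>2 / d else 0)
       | _ \<Rightarrow> B $ i $ j))))"

end

(*
  Let q = (Aq, Bq) maximise the continuous F on the compact set Atilde, and weight every
  entry by w_ij = sqrt (Aq_ij Bq_ij) Omega_ij >= 0.  The iterates keep B positive on the
  support of Omega (this is what the interior starting point is for), so the potential
  V(B) = sum w_ij ln B_ij is finite along the iteration, and bounded above since B_ij <= b_j.
  One sweep (A, B) -> (A', B'') has the closed form B_ij / B''_ij = (alpha_i beta_j / Omega_ij^2)^2
  with alpha_i^2 = r_i / a_i, beta_j^2 = s_j / b_j (r, s the weighted row and column masses).
  Splitting alpha_i beta_j / Omega_ij^2 into two factors balanced by sqrt Aq_ij and sqrt Bq_ij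
  and using ln t <= t - 1 gives, after summation,
    V(B'') - V(B) >= 4 F(q) - 2 F(A', B) - 2 F(A', B'') >= 2 (F(q) - F(A', B'')),
  because F(A', B) = sum_i sqrt (a_i r_i) and F(A', B'') = sum_j sqrt (b_j s_j).
  So the optimality gaps are summable, hence tend to 0.
*)

theory Submission
  imports Defs
begin

lemma sum_UNIV_option:
  "(\<Sum>x\<in>(UNIV::'a::finite option set). f x) = f None + (\<Sum>i\<in>UNIV. f (Some i))"
  by (simp add: UNIV_option_conv sum.reindex)

lemma transpose_nth [simp]: "transpose A $ i $ j = A $ j $ i"
  by (simp add: transpose_def)

lemma AtildeD:
  assumes "(A, B) \<in> Atilde a b Omega"
  shows "0 \<le> A $ r $ c" "0 \<le> B $ r $ c"
    "a $ i = (\<Sum>c\<in>UNIV. A $ Some i $ c)" "b $ j = (\<Sum>r\<in>UNIV. B $ r $ Some j)"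
    "A $ None $ c = 0" "B $ r $ None = 0"
    "Omega $ i $ j \<le> 0 \<Longrightarrow> A $ Some i $ Some j = 0"
    "Omega $ i $ j \<le> 0 \<Longrightarrow> B $ Some i $ Some j = 0"
    "0 < Omega $ i $ j \<Longrightarrow> A $ Some i $ None = 0"
    "0 < Omega $ i $ j \<Longrightarrow> B $ None $ Some j = 0"
  using assms by (auto simp: Atilde_def Aset_def)

lemma Atilde_row_sum_le:
  assumes "(A, B) \<in> Atilde a b Omega"
  shows "(\<Sum>j\<in>UNIV. A $ Some i $ Some j) \<le> a $ i"
  using AtildeD[OF assms] sum_UNIV_option[of "\<lambda>c. A $ Some i $ c"] by simp

lemma Atilde_col_sum_le:
  assumes "(A, B) \<in> Atilde a b Omega"
  shows "(\<Sum>i\<in>UNIV. B $ Some i $ Some j) \<le> b $ j"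
  using AtildeD[OF assms] sum_UNIV_option[of "\<lambda>r. B $ r $ Some j"] by simp

lemma snd_T1 [simp]: "snd (T1 a Omega p) = snd p"
  by (simp add: T1_def split: prod.split)

lemma fst_T2 [simp]: "fst (T2 b Omega p) = fst p"
  by (simp add: T2_def split: prod.split)

lemma Fobj_eq:
  "Fobj Omega p = (\<Sum>i\<in>UNIV. \<Sum>j\<in>UNIV. sqrt (fst p $ Some i $ Some j * snd p $ Some i $ Some j) * Omega $ i $ j)"
  by (simp add: Fobj_def split: prod.split)

text \<open>Mapping (A, B) to (B^T, A^T) turns the problem for (a, b, Omega) into the one for
  (b, a, Omega^T) and T2 into T1, so every fact about T1 yields its mirror image for T2.\<close>

definition transpose_pair :: "('m::finite,'n::finite) mat0 \<times> ('m,'n) mat0 \<Rightarrow> ('n,'m) mat0 \<times> ('n,'m) mat0" where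
  "transpose_pair p = (transpose (snd p), transpose (fst p))"

lemma transpose_pair_Pair [simp]: "transpose_pair (A, B) = (transpose B, transpose A)"
  by (simp add: transpose_pair_def)

lemma transpose_pair_transpose_pair [simp]: "transpose_pair (transpose_pair p) = p"
  by (simp add: transpose_pair_def)

lemma transpose_pair_in_Atilde_iff:
  "transpose_pair p \<in> Atilde b a (transpose Omega) \<longleftrightarrow> p \<in> Atilde a b Omega"
  by (cases p) (auto simp: Atilde_def Aset_def)

lemma Fobj_transpose_pair: "Fobj (transpose Omega) (transpose_pair p) = Fobj Omega p"
proof (cases p)
  case (Pair A B)
  have "Fobj (transpose Omega) (transpose_pair p)
      = (\<Sum>j\<in>UNIV. \<Sum>i\<in>UNIV. sqrt (A $ Some i $ Some j * B $ Some i $ Some j) * Omega $ i $ j)"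
    by (simp add: Pair Fobj_def mult.commute)
  also have "\<dots> = Fobj Omega p"
    by (subst sum.swap) (simp add: Pair Fobj_def)
  finally show ?thesis .
qed

lemma T2_eq_transpose_pair_T1:
  "T2 b Omega p = transpose_pair (T1 b (transpose Omega) (transpose_pair p))"
proof (cases p)
  case (Pair A B)
  have "snd (T2 b Omega (A, B)) $ r $ c = fst (T1 b (transpose Omega) (transpose B, transpose A)) $ c $ r"
    for r c
    by (cases r; cases c) (simp_all add: T1_def T2_def Let_def)
  then have "snd (T2 b Omega (A, B)) = transpose (fst (T1 b (transpose Omega) (transpose B, transpose A)))"
    by (simp add: vec_eq_iff)
  then show ?thesis
    by (simp add: Pair prod_eq_iff transpose_pair_def)
qed

definition row_weight :: "real ^ 'n::finite ^ 'm::finite \<Rightarrow> ('m,'n) mat0 \<Rightarrow> 'm \<Rightarrow> real" where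
  "row_weight Omega M i = (\<Sum>k\<in>UNIV. M $ Some i $ Some k * (Omega $ i $ k)\<^sup>2)"

definition col_weight :: "real ^ 'n::finite ^ 'm::finite \<Rightarrow> ('m,'n) mat0 \<Rightarrow> 'n \<Rightarrow> real" where
  "col_weight Omega M j = (\<Sum>k\<in>UNIV. M $ Some k $ Some j * (Omega $ k $ j)\<^sup>2)"

lemma row_weight_transpose: "row_weight (transpose Omega) (transpose M) = col_weight Omega M"
  by (simp add: row_weight_def col_weight_def fun_eq_iff)

lemma T1_nth:
  "fst (T1 a Omega (A, B)) $ None $ c = A $ None $ c"
  "fst (T1 a Omega (A, B)) $ Some i $ None = A $ Some i $ None"
  "fst (T1 a Omega (A, B)) $ Some i $ Some j =
     (if 0 < row_weight Omega B i
      then a $ i * B $ Some i $ Some j * (Omega $ i $ j)\<^sup>2 / row_weight Omega B i else 0)"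
  by (simp_all add: T1_def row_weight_def Let_def)

lemma T2_nth:
  "snd (T2 b Omega (A, B)) $ Some i $ Some j =
     (if 0 < col_weight Omega A j
      then b $ j * A $ Some i $ Some j * (Omega $ i $ j)\<^sup>2 / col_weight Omega A j else 0)"
  by (simp add: T2_def col_weight_def Let_def)

definition pos_on_support :: "real ^ 'n::finite ^ 'm::finite \<Rightarrow> ('m,'n) mat0 \<Rightarrow> bool" where
  "pos_on_support Omega M \<longleftrightarrow> (\<forall>i j. 0 < Omega $ i $ j \<longrightarrow> 0 < M $ Some i $ Some j)"

lemma pos_on_support_transpose: "pos_on_support (transpose Omega) (transpose M) \<longleftrightarrow> pos_on_support Omega M"
  by (auto simp: pos_on_support_def)

lemma row_weight_nonneg:
  assumes "(A, B) \<in> Atilde a b Omega"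
  shows "0 \<le> row_weight Omega B i"
  unfolding row_weight_def using AtildeD(2)[OF assms] by (intro sum_nonneg) simp

lemma row_weight_pos_iff:
  assumes "(A, B) \<in> Atilde a b Omega" and "pos_on_support Omega B"
  shows "0 < row_weight Omega B i \<longleftrightarrow> (\<exists>j. 0 < Omega $ i $ j)"
proof
  assume "0 < row_weight Omega B i"
  then obtain j where "B $ Some i $ Some j * (Omega $ i $ j)\<^sup>2 \<noteq> 0"
    unfolding row_weight_def by (metis (no_types, lifting) less_irrefl sum.neutral)
  then show "\<exists>j. 0 < Omega $ i $ j"
    using AtildeD(8)[OF assms(1)] by (metis mult_eq_0_iff not_less)
next
  assume "\<exists>j. 0 < Omega $ i $ j"
  then obtain j where j: "0 < Omega $ i $ j" ..
  show "0 < row_weight Omega B i"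
    unfolding row_weight_def
  proof (rule sum_pos2[of UNIV j])
    show "0 < B $ Some i $ Some j * (Omega $ i $ j)\<^sup>2"
      using assms(2) j by (simp add: pos_on_support_def)
  qed (use AtildeD(2)[OF assms(1)] in auto)
qed

lemma T1_row_sum:
  assumes AB: "(A, B) \<in> Atilde a b Omega" and B: "pos_on_support Omega B"
  shows "a $ i = (\<Sum>c\<in>UNIV. fst (T1 a Omega (A, B)) $ Some i $ c)"
proof (cases "\<exists>j. 0 < Omega $ i $ j")
  case True
  then have r: "0 < row_weight Omega B i"
    using row_weight_pos_iff[OF AB B] by blast
  have "(\<Sum>j\<in>UNIV. fst (T1 a Omega (A, B)) $ Some i $ Some j)
      = a $ i * (\<Sum>j\<in>UNIV. B $ Some i $ Some j * (Omega $ i $ j)\<^sup>2) / row_weight Omega B i"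
    using r by (simp add: T1_nth sum_divide_distrib sum_distrib_left mult.assoc)
  also have "\<dots> = a $ i"
    using r by (simp add: row_weight_def)
  finally show ?thesis
    using True AtildeD(9)[OF AB] by (auto simp: sum_UNIV_option T1_nth)
next
  case False
  then have "row_weight Omega B i = 0"
    using row_weight_pos_iff[OF AB B, of i] row_weight_nonneg[OF AB, of i] by simp
  moreover have "A $ Some i $ Some j = 0" for j
    using False AtildeD(7)[OF AB] by (simp add: not_less)
  ultimately show ?thesis
    using AtildeD(3)[OF AB, of i] by (simp add: sum_UNIV_option T1_nth)
qed

lemma T1_in_Atilde:
  assumes AB: "(A, B) \<in> Atilde a b Omega" and B: "pos_on_support Omega B" and a: "\<forall>i. 0 < a $ i"
  shows "T1 a Omega (A, B) \<in> Atilde a b Omega"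
proof -
  let ?A' = "fst (T1 a Omega (A, B))"
  have "0 \<le> ?A' $ r $ c" for r c
    using AtildeD(1,2)[OF AB] row_weight_nonneg[OF AB] a
    by (cases r; cases c) (auto simp: T1_nth less_imp_le)
  moreover have "Omega $ i $ j \<le> 0 \<Longrightarrow> ?A' $ Some i $ Some j = 0" for i j
    using AtildeD(8)[OF AB] by (simp add: T1_nth)
  ultimately have "(?A', B) \<in> Atilde a b Omega"
    using AtildeD[OF AB] T1_row_sum[OF AB B]
    unfolding Atilde_def Aset_def by (auto simp: T1_nth(1,2))
  moreover have "T1 a Omega (A, B) = (?A', B)"
    by (simp add: prod_eq_iff)
  ultimately show ?thesis
    by simp
qed

lemma pos_on_support_T1:
  assumes AB: "(A, B) \<in> Atilde a b Omega" and B: "pos_on_support Omega B" and a: "\<forall>i. 0 < a $ i"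
  shows "pos_on_support Omega (fst (T1 a Omega (A, B)))"
  unfolding pos_on_support_def
proof (intro allI impI)
  fix i j assume ij: "0 < Omega $ i $ j"
  then have "0 < row_weight Omega B i"
    using row_weight_pos_iff[OF AB B] by blast
  then show "0 < fst (T1 a Omega (A, B)) $ Some i $ Some j"
    using B ij a by (simp add: T1_nth pos_on_support_def)
qed

lemma T2_in_Atilde:
  assumes "(A, B) \<in> Atilde a b Omega" and "pos_on_support Omega A" and "\<forall>j. 0 < b $ j"
  shows "T2 b Omega (A, B) \<in> Atilde a b Omega"
proof -
  have "(transpose B, transpose A) \<in> Atilde b a (transpose Omega)"
    using assms(1) transpose_pair_in_Atilde_iff[of "(A, B)"] by simp
  from T1_in_Atilde[OF this] assms(2,3)
  have "T1 b (transpose Omega) (transpose B, transpose A) \<in> Atilde b a (transpose Omega)"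
    by (simp add: pos_on_support_transpose)
  then show ?thesis
    using transpose_pair_in_Atilde_iff[of "transpose_pair (T1 b (transpose Omega) (transpose B, transpose A))"]
    by (simp add: T2_eq_transpose_pair_T1)
qed

lemma pos_on_support_T2:
  assumes "(A, B) \<in> Atilde a b Omega" and "pos_on_support Omega A" and "\<forall>j. 0 < b $ j"
  shows "pos_on_support Omega (snd (T2 b Omega (A, B)))"
proof -
  have "(transpose B, transpose A) \<in> Atilde b a (transpose Omega)"
    using assms(1) transpose_pair_in_Atilde_iff[of "(A, B)"] by simp
  from pos_on_support_T1[OF this] assms(2,3)
  have "pos_on_support (transpose Omega) (fst (T1 b (transpose Omega) (transpose B, transpose A)))"
    by (simp add: pos_on_support_transpose)
  then show ?thesis
    using pos_on_support_transpose[of "transpose Omega"]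
    by (simp add: T2_eq_transpose_pair_T1 transpose_pair_def)
qed

lemma Fobj_T1:
  assumes AB: "(A, B) \<in> Atilde a b Omega" and a: "\<forall>i. 0 < a $ i"
  shows "Fobj Omega (T1 a Omega (A, B)) = (\<Sum>i\<in>UNIV. sqrt (a $ i * row_weight Omega B i))"
proof -
  have "(\<Sum>j\<in>UNIV. sqrt (fst (T1 a Omega (A, B)) $ Some i $ Some j * B $ Some i $ Some j) * Omega $ i $ j)
      = sqrt (a $ i * row_weight Omega B i)" for i
  proof (cases "0 < row_weight Omega B i")
    case True
    let ?r = "row_weight Omega B i"
    have "sqrt (fst (T1 a Omega (A, B)) $ Some i $ Some j * B $ Some i $ Some j) * Omega $ i $ j
        = sqrt (a $ i / ?r) * (B $ Some i $ Some j * (Omega $ i $ j)\<^sup>2)" for j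
    proof -
      have "0 \<le> B $ Some i $ Some j * Omega $ i $ j"
        using AtildeD(2,8)[OF AB] by (cases "Omega $ i $ j \<le> 0") auto
      then have "sqrt (a $ i / ?r * (B $ Some i $ Some j * Omega $ i $ j)\<^sup>2)
          = sqrt (a $ i / ?r) * (B $ Some i $ Some j * Omega $ i $ j)"
        by (simp only: real_sqrt_mult real_sqrt_abs abs_of_nonneg)
      moreover have "fst (T1 a Omega (A, B)) $ Some i $ Some j * B $ Some i $ Some j
          = a $ i / ?r * (B $ Some i $ Some j * Omega $ i $ j)\<^sup>2"
        using True by (simp add: T1_nth power2_eq_square)
      ultimately show ?thesis
        by (simp add: power2_eq_square)
    qed
    then have "(\<Sum>j\<in>UNIV. sqrt (fst (T1 a Omega (A, B)) $ Some i $ Some j * B $ Some i $ Some j) * Omega $ i $ j)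
        = sqrt (a $ i / ?r) * ?r"
      by (simp add: row_weight_def sum_distrib_left)
    also have "\<dots> = sqrt (a $ i * ?r)"
      using True a by (simp add: real_sqrt_divide real_sqrt_mult field_simps)
    finally show ?thesis .
  next
    case False
    then show ?thesis
      using row_weight_nonneg[OF AB, of i] by (simp add: T1_nth)
  qed
  then show ?thesis
    by (simp add: Fobj_eq)
qed

lemma sum_row_weight_le_Fobj_T1:
  assumes "(Ao, Bo) \<in> Atilde a b Omega" and AB: "(A, B) \<in> Atilde a b Omega" and a: "\<forall>i. 0 < a $ i"
  shows "(\<Sum>i\<in>UNIV. \<Sum>j\<in>UNIV. Ao $ Some i $ Some j * sqrt (row_weight Omega B i / a $ i))
    \<le> Fobj Omega (T1 a Omega (A, B))"
proof -
  have "(\<Sum>j\<in>UNIV. Ao $ Some i $ Some j * sqrt (row_weight Omega B i / a $ i))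
      \<le> a $ i * sqrt (row_weight Omega B i / a $ i)" for i
    unfolding sum_distrib_right[symmetric]
    using Atilde_row_sum_le[OF assms(1), of i] row_weight_nonneg[OF AB, of i] a[rule_format, of i]
    by (intro mult_right_mono) auto
  also have "a $ i * sqrt (row_weight Omega B i / a $ i) = sqrt (a $ i * row_weight Omega B i)" for i
  proof -
    have "a $ i * row_weight Omega B i = (a $ i)\<^sup>2 * (row_weight Omega B i / a $ i)"
      using a[rule_format, of i] by (simp add: power2_eq_square)
    then show ?thesis
      using a[rule_format, of i] by (simp only: real_sqrt_mult real_sqrt_abs abs_of_pos)
  qed
  finally show ?thesis
    unfolding Fobj_T1[OF AB a] by (rule sum_mono)
qed

lemma sum_col_weight_le_Fobj_T2:
  assumes "(Ao, Bo) \<in> Atilde a b Omega" and "(A, B) \<in> Atilde a b Omega" and "\<forall>j. 0 < b $ j"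
  shows "(\<Sum>i\<in>UNIV. \<Sum>j\<in>UNIV. Bo $ Some i $ Some j * sqrt (col_weight Omega A j / b $ j))
    \<le> Fobj Omega (T2 b Omega (A, B))"
proof -
  have "(transpose Bo, transpose Ao) \<in> Atilde b a (transpose Omega)"
    and "(transpose B, transpose A) \<in> Atilde b a (transpose Omega)"
    using assms(1,2) transpose_pair_in_Atilde_iff by (metis transpose_pair_Pair)+
  from sum_row_weight_le_Fobj_T1[OF this assms(3)]
  have "(\<Sum>j\<in>UNIV. \<Sum>i\<in>UNIV. Bo $ Some i $ Some j * sqrt (col_weight Omega A j / b $ j))
    \<le> Fobj Omega (T2 b Omega (A, B))"
    using Fobj_transpose_pair[of "transpose Omega"]
    by (simp add: row_weight_transpose T2_eq_transpose_pair_T1)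
  then show ?thesis
    by (subst sum.swap)
qed

lemma col_weight_pos_iff:
  assumes "(A, B) \<in> Atilde a b Omega" and "pos_on_support Omega A"
  shows "0 < col_weight Omega A j \<longleftrightarrow> (\<exists>i. 0 < Omega $ i $ j)"
proof -
  have "(transpose B, transpose A) \<in> Atilde b a (transpose Omega)"
    using assms(1) transpose_pair_in_Atilde_iff[of "(A, B)"] by simp
  from row_weight_pos_iff[OF this, of j] assms(2) show ?thesis
    by (simp add: row_weight_transpose pos_on_support_transpose)
qed

lemma T2_T1_invariant:
  assumes "p \<in> Atilde a b Omega" and "pos_on_support Omega (snd p)"
    and a: "\<forall>i. 0 < a $ i" and b: "\<forall>j. 0 < b $ j"
  shows "T2 b Omega (T1 a Omega p) \<in> Atilde a b Omega \<and> pos_on_support Omega (snd (T2 b Omega (T1 a Omega p)))"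
proof -
  obtain A B where p: "p = (A, B)"
    by (cases p)
  define A' where "A' = fst (T1 a Omega (A, B))"
  have T1: "T1 a Omega (A, B) = (A', B)"
    by (simp add: A'_def prod_eq_iff)
  have AB: "(A, B) \<in> Atilde a b Omega" and B: "pos_on_support Omega B"
    using assms(1,2) by (simp_all add: p)
  have A'B: "(A', B) \<in> Atilde a b Omega" and A': "pos_on_support Omega A'"
    using T1_in_Atilde[OF AB B a] pos_on_support_T1[OF AB B a] by (simp_all add: T1)
  show ?thesis
    using T2_in_Atilde[OF A'B A' b] pos_on_support_T2[OF A'B A' b] by (simp add: p T1)
qed

section \<open>A Lyapunov function for the iteration\<close>

lemma T2_T1_nth:
  assumes AB: "(A, B) \<in> Atilde a b Omega" and B: "pos_on_support Omega B"
    and a: "\<forall>i. 0 < a $ i" and b: "\<forall>j. 0 < b $ j" and ij: "0 < Omega $ i $ j"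
  defines "A' \<equiv> fst (T1 a Omega (A, B))"
  shows "B $ Some i $ Some j =
    (sqrt (row_weight Omega B i / a $ i) * sqrt (col_weight Omega A' j / b $ j) / (Omega $ i $ j)\<^sup>2)\<^sup>2
    * snd (T2 b Omega (A', B)) $ Some i $ Some j"
proof -
  let ?r = "row_weight Omega B i" and ?s = "col_weight Omega A' j"
  have T1: "T1 a Omega (A, B) = (A', B)"
    by (simp add: A'_def prod_eq_iff)
  have r: "0 < ?r"
    using row_weight_pos_iff[OF AB B] ij by blast
  have "0 < ?s"
    using col_weight_pos_iff[OF T1_in_Atilde[OF AB B a, unfolded T1] pos_on_support_T1[OF AB B a, folded A'_def]] ij
    by blast
  with r a[rule_format, of i] b[rule_format, of j] ij show ?thesis
    by (simp add: T2_nth T1_nth A'_def power_mult_distrib power_divide field_simps)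
qed

lemma sqrt_mult_ln_le:
  fixes x y w \<alpha> \<beta> :: real
  assumes x: "0 \<le> x" and y: "0 \<le> y" and w: "0 < w" and \<alpha>: "0 < \<alpha>" and \<beta>: "0 < \<beta>"
  shows "sqrt (x * y) * w * ln (\<alpha> * \<beta> / w\<^sup>2) \<le> x * \<alpha> + y * \<beta> - 2 * (sqrt (x * y) * w)"
proof (cases "x = 0 \<or> y = 0")
  case True
  then show ?thesis
    using x y \<alpha> \<beta> by auto
next
  case False
  define u v where "u = sqrt x" and "v = sqrt y"
  have u: "0 < u" and v: "0 < v"
    using False x y by (auto simp: u_def v_def)
  define t1 t2 where "t1 = \<alpha> * u / (w * v)" and "t2 = \<beta> * v / (w * u)"
  have t: "0 < t1" "0 < t2"
    using u v w \<alpha> \<beta> by (auto simp: t1_def t2_def)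
  have "\<alpha> * \<beta> / w\<^sup>2 = t1 * t2"
    using u v w by (simp add: t1_def t2_def power2_eq_square field_simps)
  then have "ln (\<alpha> * \<beta> / w\<^sup>2) = ln t1 + ln t2"
    using t by (simp add: ln_mult)
  also have "\<dots> \<le> (t1 - 1) + (t2 - 1)"
    using t by (intro add_mono ln_le_minus_one)
  finally have "u * v * w * ln (\<alpha> * \<beta> / w\<^sup>2) \<le> u * v * w * ((t1 - 1) + (t2 - 1))"
    using u v w by (intro mult_left_mono) auto
  also have "\<dots> = u\<^sup>2 * \<alpha> + v\<^sup>2 * \<beta> - 2 * (u * v * w)"
    using u v w by (simp add: t1_def t2_def power2_eq_square field_simps)
  finally show ?thesis
    using x y by (simp add: u_def v_def real_sqrt_mult)
qed

definition potential :: "real ^ 'n::finite ^ 'm::finite \<Rightarrow> ('m,'n) mat0 \<times> ('m,'n) mat0 \<Rightarrow> ('m,'n) mat0 \<Rightarrow> real"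
  where "potential Omega q B = (\<Sum>i\<in>UNIV. \<Sum>j\<in>UNIV.
    sqrt (fst q $ Some i $ Some j * snd q $ Some i $ Some j) * Omega $ i $ j * ln (B $ Some i $ Some j))"

lemma potential_increment_entry:
  fixes a :: "real ^ 'm::finite" and b :: "real ^ 'n::finite" and Omega :: "real ^ 'n ^ 'm"
    and i :: 'm and j :: 'n
  assumes q: "(Ao, Bo) \<in> Atilde a b Omega" and AB: "(A, B) \<in> Atilde a b Omega" and B: "pos_on_support Omega B"
    and a: "\<forall>i. 0 < a $ i" and b: "\<forall>j. 0 < b $ j"
  defines "A' \<equiv> fst (T1 a Omega (A, B))"
    and "w \<equiv> sqrt (Ao $ Some i $ Some j * Bo $ Some i $ Some j) * Omega $ i $ j"
  shows "4 * w - 2 * (Ao $ Some i $ Some j * sqrt (row_weight Omega B i / a $ i))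
      - 2 * (Bo $ Some i $ Some j * sqrt (col_weight Omega A' j / b $ j))
    \<le> w * (ln (snd (T2 b Omega (A', B)) $ Some i $ Some j) - ln (B $ Some i $ Some j))"
proof (cases "0 < Omega $ i $ j")
  case False
  then show ?thesis
    using AtildeD(1,2,7,8)[OF q] a b by (simp add: w_def)
next
  case True
  let ?B'' = "snd (T2 b Omega (A', B)) $ Some i $ Some j"
  define \<alpha> \<beta> where "\<alpha> = sqrt (row_weight Omega B i / a $ i)" and "\<beta> = sqrt (col_weight Omega A' j / b $ j)"
  have T1: "T1 a Omega (A, B) = (A', B)"
    by (simp add: A'_def prod_eq_iff)
  have A'B: "(A', B) \<in> Atilde a b Omega" and A'_pos: "pos_on_support Omega A'"
    using T1_in_Atilde[OF AB B a] pos_on_support_T1[OF AB B a] by (simp_all add: T1)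
  have "0 < \<alpha>"
    using row_weight_pos_iff[OF AB B, of i] True a by (auto simp: \<alpha>_def)
  moreover have "0 < \<beta>"
    using col_weight_pos_iff[OF A'B A'_pos, of j] True b by (auto simp: \<beta>_def)
  moreover have "0 < ?B''"
    using pos_on_support_T2[OF A'B A'_pos b] True by (simp add: pos_on_support_def)
  moreover have "B $ Some i $ Some j = (\<alpha> * \<beta> / (Omega $ i $ j)\<^sup>2)\<^sup>2 * ?B''"
    using T2_T1_nth[OF AB B a b True] by (simp add: \<alpha>_def \<beta>_def T1)
  ultimately have "ln (B $ Some i $ Some j) = 2 * ln (\<alpha> * \<beta> / (Omega $ i $ j)\<^sup>2) + ln ?B''"
    using True by (simp add: ln_mult ln_realpow)
  then have "w * (ln ?B'' - ln (B $ Some i $ Some j)) = - 2 * (w * ln (\<alpha> * \<beta> / (Omega $ i $ j)\<^sup>2))"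
    by (simp add: algebra_simps)
  moreover have "w * ln (\<alpha> * \<beta> / (Omega $ i $ j)\<^sup>2)
      \<le> Ao $ Some i $ Some j * \<alpha> + Bo $ Some i $ Some j * \<beta> - 2 * w"
    unfolding w_def using AtildeD(1,2)[OF q] True \<open>0 < \<alpha>\<close> \<open>0 < \<beta>\<close>
    by (intro sqrt_mult_ln_le)
  ultimately show ?thesis
    unfolding \<alpha>_def \<beta>_def by linarith
qed

lemma potential_step:
  assumes q: "(Ao, Bo) \<in> Atilde a b Omega" and AB: "(A, B) \<in> Atilde a b Omega" and B: "pos_on_support Omega B"
    and a: "\<forall>i. 0 < a $ i" and b: "\<forall>j. 0 < b $ j"
  defines "p' \<equiv> T2 b Omega (T1 a Omega (A, B))"
  shows "4 * Fobj Omega (Ao, Bo) - 2 * Fobj Omega (T1 a Omega (A, B)) - 2 * Fobj Omega p'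
    \<le> potential Omega (Ao, Bo) (snd p') - potential Omega (Ao, Bo) B"
proof -
  define A' where "A' = fst (T1 a Omega (A, B))"
  have T1: "T1 a Omega (A, B) = (A', B)"
    by (simp add: A'_def prod_eq_iff)
  have A'B: "(A', B) \<in> Atilde a b Omega"
    using T1_in_Atilde[OF AB B a] by (simp add: T1)
  define \<alpha> where "\<alpha> i = sqrt (row_weight Omega B i / a $ i)" for i
  define \<beta> where "\<beta> j = sqrt (col_weight Omega A' j / b $ j)" for j
  define w where "w i j = sqrt (Ao $ Some i $ Some j * Bo $ Some i $ Some j) * Omega $ i $ j" for i j
  have "(\<Sum>i\<in>UNIV. \<Sum>j\<in>UNIV. 4 * w i j - 2 * (Ao $ Some i $ Some j * \<alpha> i) - 2 * (Bo $ Some i $ Some j * \<beta> j))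
      \<le> (\<Sum>i\<in>UNIV. \<Sum>j\<in>UNIV. w i j * (ln (snd p' $ Some i $ Some j) - ln (B $ Some i $ Some j)))"
    using potential_increment_entry[OF q AB B a b] by (intro sum_mono) (simp add: \<alpha>_def \<beta>_def w_def p'_def T1)
  moreover have "(\<Sum>i\<in>UNIV. \<Sum>j\<in>UNIV. Ao $ Some i $ Some j * \<alpha> i) \<le> Fobj Omega (T1 a Omega (A, B))"
    using sum_row_weight_le_Fobj_T1[OF q AB a] by (simp add: \<alpha>_def)
  moreover have "(\<Sum>i\<in>UNIV. \<Sum>j\<in>UNIV. Bo $ Some i $ Some j * \<beta> j) \<le> Fobj Omega p'"
    using sum_col_weight_le_Fobj_T2[OF q A'B b] by (simp add: \<beta>_def p'_def T1)
  moreover have "(\<Sum>i\<in>UNIV. \<Sum>j\<in>UNIV. 4 * w i j - 2 * (Ao $ Some i $ Some j * \<alpha> i) - 2 * (Bo $ Some i $ Some j * \<beta> j))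
      = 4 * Fobj Omega (Ao, Bo) - 2 * (\<Sum>i\<in>UNIV. \<Sum>j\<in>UNIV. Ao $ Some i $ Some j * \<alpha> i)
        - 2 * (\<Sum>i\<in>UNIV. \<Sum>j\<in>UNIV. Bo $ Some i $ Some j * \<beta> j)"
    by (simp add: Fobj_def w_def sum_subtractf sum_distrib_left)
  moreover have "(\<Sum>i\<in>UNIV. \<Sum>j\<in>UNIV. w i j * (ln (snd p' $ Some i $ Some j) - ln (B $ Some i $ Some j)))
      = potential Omega (Ao, Bo) (snd p') - potential Omega (Ao, Bo) B"
    by (simp add: potential_def w_def sum_subtractf right_diff_distrib)
  ultimately show ?thesis
    by linarith
qed

lemma optimality_gap_le_potential_increment:
  assumes q: "q \<in> Atilde a b Omega" and q_max: "\<forall>p\<in>Atilde a b Omega. Fobj Omega p \<le> Fobj Omega q"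
    and p: "p \<in> Atilde a b Omega" and B: "pos_on_support Omega (snd p)"
    and a: "\<forall>i. 0 < a $ i" and b: "\<forall>j. 0 < b $ j"
  shows "2 * (Fobj Omega q - Fobj Omega (T2 b Omega (T1 a Omega p)))
    \<le> potential Omega q (snd (T2 b Omega (T1 a Omega p))) - potential Omega q (snd p)"
proof -
  obtain Ao Bo A B where qp: "q = (Ao, Bo)" "p = (A, B)"
    by (cases q, cases p)
  have AB: "(A, B) \<in> Atilde a b Omega" and "pos_on_support Omega B"
    using p B by (simp_all add: qp)
  then have "Fobj Omega (T1 a Omega (A, B)) \<le> Fobj Omega q"
    using q_max T1_in_Atilde a by blast
  with potential_step[OF q[unfolded qp] AB \<open>pos_on_support Omega B\<close> a b] show ?thesis
    by (simp add: qp)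
qed

lemma potential_le_sum_ln:
  assumes q: "q \<in> Atilde a b Omega" and p: "p \<in> Atilde a b Omega" and B: "pos_on_support Omega (snd p)"
  shows "potential Omega q (snd p) \<le>
    (\<Sum>i\<in>UNIV. \<Sum>j\<in>UNIV. sqrt (fst q $ Some i $ Some j * snd q $ Some i $ Some j) * Omega $ i $ j * ln (b $ j))"
proof -
  obtain Ao Bo A B where qp: "q = (Ao, Bo)" "p = (A, B)"
    by (cases q, cases p)
  have q': "(Ao, Bo) \<in> Atilde a b Omega" and AB: "(A, B) \<in> Atilde a b Omega"
    using q p by (simp_all add: qp)
  have "sqrt (Ao $ Some i $ Some j * Bo $ Some i $ Some j) * Omega $ i $ j * ln (B $ Some i $ Some j)
    \<le> sqrt (Ao $ Some i $ Some j * Bo $ Some i $ Some j) * Omega $ i $ j * ln (b $ j)" for i j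
  proof (cases "0 < Omega $ i $ j")
    case True
    have "B $ Some i $ Some j \<le> (\<Sum>k\<in>UNIV. B $ Some k $ Some j)"
      using AtildeD(2)[OF AB] by (intro member_le_sum) auto
    also have "\<dots> \<le> b $ j"
      by (rule Atilde_col_sum_le[OF AB])
    moreover have "0 < B $ Some i $ Some j"
      using B True by (simp add: pos_on_support_def qp)
    ultimately have "ln (B $ Some i $ Some j) \<le> ln (b $ j)"
      by simp
    then show ?thesis
      using AtildeD(1,2)[OF q'] True by (intro mult_left_mono) auto
  next
    case False
    then show ?thesis
      using AtildeD(7)[OF q'] by simp
  qed
  then show ?thesis
    unfolding potential_def qp fst_conv snd_conv by (intro sum_mono)
qed

section \<open>Positivity at relative interior points\<close>

lemma rel_interior_extend:
  fixes S :: "'a::euclidean_space set"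
  assumes "p \<in> rel_interior S" and "q \<in> S"
  shows "\<exists>t>0. p + t *\<^sub>R (p - q) \<in> S"
proof -
  obtain e where e: "0 < e" and sub: "ball p e \<inter> affine hull S \<subseteq> S" and p: "p \<in> S"
    using assms(1) unfolding mem_rel_interior_ball by blast
  define n where "n = norm (p - q) + 1"
  have n: "0 < n"
    by (simp add: n_def add_nonneg_pos)
  define t where "t = e / (2 * n)"
  have t: "0 < t"
    using e n by (simp add: t_def)
  have "p + t *\<^sub>R (p - q) = (1 + t) *\<^sub>R p + (- t) *\<^sub>R q"
    by (simp add: algebra_simps)
  also have "\<dots> \<in> affine hull S"
    by (rule mem_affine[OF affine_affine_hull hull_inc[OF p] hull_inc[OF assms(2)]]) simp
  finally have "p + t *\<^sub>R (p - q) \<in> affine hull S" .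
  moreover have "t * norm (p - q) < e"
  proof -
    have "t * norm (p - q) < t * n"
      using t by (simp add: n_def)
    also have "\<dots> = e / 2"
      using n by (simp add: t_def)
    finally show ?thesis
      using e by linarith
  qed
  then have "p + t *\<^sub>R (p - q) \<in> ball p e"
    using t by (simp add: dist_norm)
  ultimately show ?thesis
    using sub t by blast
qed

lemma rel_interior_linear_pos:
  fixes S :: "'a::euclidean_space set" and f :: "'a \<Rightarrow> real"
  assumes "p \<in> rel_interior S" and "q \<in> S" and "linear f"
    and "\<forall>x\<in>S. 0 \<le> f x" and "0 < f q"
  shows "0 < f p"
proof -
  obtain t where t: "0 < t" and "p + t *\<^sub>R (p - q) \<in> S"
    using rel_interior_extend[OF assms(1,2)] by blast
  then have "0 \<le> f (p + t *\<^sub>R (p - q))"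
    using assms(4) by blast
  also have "f (p + t *\<^sub>R (p - q)) = (1 + t) * f p - t * f q"
    using assms(3) by (simp add: linear_add linear_scale linear_diff algebra_simps)
  finally have "t * f q \<le> (1 + t) * f p"
    by simp
  moreover have "0 < t * f q"
    using t assms(5) by simp
  ultimately have "0 < (1 + t) * f p"
    by linarith
  then show ?thesis
    using t by (simp add: zero_less_mult_iff)
qed

lemma ex_in_Atilde_pos_entry:
  fixes a :: "real ^ 'm::finite" and b :: "real ^ 'n::finite" and Omega :: "real ^ 'n ^ 'm"
  assumes ij: "0 < Omega $ i0 $ j0" and a: "\<forall>i. 0 \<le> a $ i" and b: "\<forall>j. 0 < b $ j"
  shows "\<exists>p\<in>Atilde a b Omega. 0 < snd p $ Some i0 $ Some j0"
proof -
  define col where "col i = (SOME j. 0 < Omega $ i $ j)" for i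
  define row where "row j = (if j = j0 then i0 else SOME i. 0 < Omega $ i $ j)" for j
  have col: "0 < Omega $ i $ col i" if "\<exists>j. 0 < Omega $ i $ j" for i
    using that unfolding col_def by (rule someI_ex)
  have row: "0 < Omega $ row j $ j" if "\<exists>i. 0 < Omega $ i $ j" for j
    using that ij unfolding row_def by (auto intro: someI_ex)
  define A :: "('m,'n) mat0" where "A = (\<chi> r c. case r of None \<Rightarrow> 0 | Some i \<Rightarrow>
      if \<exists>j. 0 < Omega $ i $ j then (if c = Some (col i) then a $ i else 0)
      else (if c = None then a $ i else 0))"
  define B :: "('m,'n) mat0" where "B = (\<chi> r c. case c of None \<Rightarrow> 0 | Some j \<Rightarrow>
      if \<exists>i. 0 < Omega $ i $ j then (if r = Some (row j) then b $ j else 0)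
      else (if r = None then b $ j else 0))"
  have "0 \<le> A $ r $ c" "0 \<le> B $ r $ c" for r c
    using a b by (auto simp: A_def B_def less_imp_le split: option.split)
  moreover have "a $ i = (\<Sum>c\<in>UNIV. A $ Some i $ c)" for i
    by (cases "\<exists>j. 0 < Omega $ i $ j") (simp_all add: A_def)
  moreover have "b $ j = (\<Sum>r\<in>UNIV. B $ r $ Some j)" for j
    by (cases "\<exists>i. 0 < Omega $ i $ j") (simp_all add: B_def)
  moreover have "A $ Some i $ Some j = 0" if "Omega $ i $ j \<le> 0" for i j
  proof (cases "\<exists>j'. 0 < Omega $ i $ j'")
    case True
    then have "j \<noteq> col i"
      using col that by force
    then show ?thesis
      by (simp add: A_def)
  qed (simp add: A_def)
  moreover have "B $ Some i $ Some j = 0" if "Omega $ i $ j \<le> 0" for i j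
  proof (cases "\<exists>i'. 0 < Omega $ i' $ j")
    case True
    then have "i \<noteq> row j"
      using row that by force
    then show ?thesis
      by (simp add: B_def)
  qed (simp add: B_def)
  ultimately have "(A, B) \<in> Atilde a b Omega"
    unfolding Atilde_def Aset_def by (simp add: A_def B_def)
  moreover have "0 < B $ Some i0 $ Some j0"
    using ij b by (auto simp: B_def row_def)
  ultimately show ?thesis
    by force
qed

lemma pos_on_support_rel_interior:
  fixes a :: "real ^ 'm::finite" and b :: "real ^ 'n::finite" and Omega :: "real ^ 'n ^ 'm"
  assumes p: "p \<in> rel_interior (Atilde a b Omega)" and a: "\<forall>i. 0 \<le> a $ i" and b: "\<forall>j. 0 < b $ j"
  shows "pos_on_support Omega (snd p)"
  unfolding pos_on_support_def
proof (intro allI impI)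
  fix i j assume ij: "0 < Omega $ i $ j"
  obtain q where "q \<in> Atilde a b Omega" and "0 < snd q $ Some i $ Some j"
    using ex_in_Atilde_pos_entry[OF ij a b] by blast
  moreover have "linear (\<lambda>x :: ('m,'n) mat0 \<times> ('m,'n) mat0. snd x $ Some i $ Some j)"
    by (auto intro!: linearI)
  moreover have "\<forall>x\<in>Atilde a b Omega. 0 \<le> snd x $ Some i $ Some j"
    using AtildeD(2) by fastforce
  ultimately show "0 < snd p $ Some i $ Some j"
    using rel_interior_linear_pos[OF p] by blast
qed

lemma iterates_invariant:
  assumes p0: "p0 \<in> rel_interior (Atilde a b Omega)" and a: "\<forall>i. 0 < a $ i" and b: "\<forall>j. 0 < b $ j"
  shows "((\<lambda>x. T2 b Omega (T1 a Omega x)) ^^ k) p0 \<in> Atilde a b Omega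
    \<and> pos_on_support Omega (snd (((\<lambda>x. T2 b Omega (T1 a Omega x)) ^^ k) p0))"
proof (induction k)
  case 0
  show ?case
    using rel_interior_subset p0 pos_on_support_rel_interior[OF p0] a b by (auto simp: less_imp_le)
next
  case (Suc k)
  then show ?case
    using T2_T1_invariant[OF _ _ a b] by simp
qed

lemma norm_le_sum_abs_nth:
  fixes M :: "real ^ 'n::finite ^ 'm::finite"
  shows "norm M \<le> (\<Sum>r\<in>UNIV. \<Sum>c\<in>UNIV. \<bar>M $ r $ c\<bar>)"
proof -
  have "norm M \<le> (\<Sum>r\<in>UNIV. norm (M $ r))"
    unfolding norm_vec_def by (rule L2_set_le_sum) simp
  also have "\<dots> \<le> (\<Sum>r\<in>UNIV. \<Sum>c\<in>UNIV. \<bar>M $ r $ c\<bar>)"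
    by (intro sum_mono norm_le_l1_cart)
  finally show ?thesis .
qed

lemma bounded_Atilde: "bounded (Atilde a b Omega)"
  unfolding bounded_iff
proof (intro exI ballI)
  fix p assume "p \<in> Atilde a b Omega"
  then obtain A B where p: "p = (A, B)" and AB: "(A, B) \<in> Atilde a b Omega"
    by (cases p) auto
  have "norm A \<le> (\<Sum>r\<in>UNIV. \<Sum>c\<in>UNIV. A $ r $ c)"
    using norm_le_sum_abs_nth[of A] AtildeD(1)[OF AB] by simp
  also have "\<dots> = (\<Sum>i\<in>UNIV. a $ i)"
    using AtildeD(3,5)[OF AB] by (simp add: sum_UNIV_option)
  finally have nA: "norm A \<le> (\<Sum>i\<in>UNIV. a $ i)" .
  have "norm B \<le> (\<Sum>r\<in>UNIV. \<Sum>c\<in>UNIV. B $ r $ c)"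
    using norm_le_sum_abs_nth[of B] AtildeD(2)[OF AB] by simp
  also have "\<dots> = (\<Sum>c\<in>UNIV. \<Sum>r\<in>UNIV. B $ r $ c)"
    by (rule sum.swap)
  also have "\<dots> = (\<Sum>j\<in>UNIV. b $ j)"
    using AtildeD(4,6)[OF AB] by (simp add: sum_UNIV_option)
  finally have nB: "norm B \<le> (\<Sum>j\<in>UNIV. b $ j)" .
  from nA nB show "norm p \<le> (\<Sum>i\<in>UNIV. a $ i) + (\<Sum>j\<in>UNIV. b $ j)"
    using norm_Pair_le[of A B] unfolding p by linarith
qed

lemma closed_Atilde: "closed (Atilde a b Omega)"
proof -
  have "Atilde a b Omega = {p.
     (\<forall>i j. 0 \<le> fst p $ i $ j \<and> 0 \<le> snd p $ i $ j) \<and>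
     (\<forall>i. a $ i = (\<Sum>j\<in>UNIV. fst p $ Some i $ j)) \<and>
     (\<forall>j. fst p $ None $ j = 0) \<and>
     (\<forall>j. b $ j = (\<Sum>i\<in>UNIV. snd p $ i $ Some j)) \<and>
     (\<forall>i. snd p $ i $ None = 0) \<and>
     (\<forall>i j. Omega $ i $ j \<le> 0 \<longrightarrow> fst p $ Some i $ Some j = 0 \<and> snd p $ Some i $ Some j = 0) \<and>
     (\<forall>j. (\<exists>i. 0 < Omega $ i $ j) \<longrightarrow> snd p $ None $ Some j = 0) \<and>
     (\<forall>i. (\<exists>j. 0 < Omega $ i $ j) \<longrightarrow> fst p $ Some i $ None = 0)}"
    by (auto simp: Atilde_def Aset_def)
  also have "closed \<dots>"
    by (intro closed_Collect_conj closed_Collect_all closed_Collect_imp closed_Collect_le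
        closed_Collect_eq open_Collect_const continuous_intros)
  finally show ?thesis .
qed

lemma compact_Atilde: "compact (Atilde a b Omega)"
  by (simp add: compact_eq_bounded_closed bounded_Atilde closed_Atilde)

lemma continuous_on_Fobj: "continuous_on S (Fobj Omega)"
  unfolding Fobj_eq[abs_def] by (intro continuous_intros)

lemma tendsto_zero_if_le_increments:
  fixes e V :: "nat \<Rightarrow> real"
  assumes nonneg: "\<And>k. 0 \<le> e k" and le: "\<And>k. e k \<le> V (Suc k) - V k" and bound: "\<And>k. V k \<le> M"
  shows "e \<longlonglongrightarrow> 0"
proof -
  have "summable e"
  proof (rule summableI_nonneg_bounded)
    fix N
    have "(\<Sum>k<N. e k) \<le> (\<Sum>k<N. V (Suc k) - V k)"
      by (intro sum_mono le)
    also have "\<dots> \<le> M - V 0"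
      using bound[of N] by (simp add: sum_lessThan_telescope)
    finally show "(\<Sum>k<N. e k) \<le> M - V 0" .
  qed (rule nonneg)
  then show ?thesis
    by (rule summable_LIMSEQ_zero)
qed

theorem theorem2p15:
  fixes a :: "real ^ 'm::finite" and b :: "real ^ 'n::finite"
    and Omega :: "real ^ 'n ^ 'm"
    and p0 :: "('m,'n) mat0 \<times> ('m,'n) mat0"
  assumes apos: "\<forall>i. a $ i > 0"
    and bpos: "\<forall>j. b $ j > 0"
    and p0_int: "p0 \<in> rel_interior (Atilde a b Omega)"
  shows "\<exists>q\<in>Atilde a b Omega. (\<forall>p\<in>Atilde a b Omega. Fobj Omega p \<le> Fobj Omega q) \<and>
           (\<lambda>k. Fobj Omega (((\<lambda>p. T2 b Omega (T1 a Omega p)) ^^ k) p0))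
             \<longlonglongrightarrow> Fobj Omega q"
proof -
  let ?S = "Atilde a b Omega"
  define p where "p k = ((\<lambda>x. T2 b Omega (T1 a Omega x)) ^^ k) p0" for k
  obtain q where q: "q \<in> ?S" and q_max: "\<forall>p\<in>?S. Fobj Omega p \<le> Fobj Omega q"
    using continuous_attains_sup[OF compact_Atilde _ continuous_on_Fobj] p0_int rel_interior_subset
    by blast
  have p: "p k \<in> ?S \<and> pos_on_support Omega (snd (p k))" for k
    unfolding p_def using iterates_invariant[OF p0_int apos bpos] .
  obtain M where M: "\<And>k. potential Omega q (snd (p k)) \<le> M"
    using potential_le_sum_ln[OF q] p by blast
  have "(\<lambda>k. Fobj Omega q - Fobj Omega (p (Suc k))) \<longlonglongrightarrow> 0"
  proof (rule tendsto_zero_if_le_increments)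
    show "0 \<le> Fobj Omega q - Fobj Omega (p (Suc k))" for k
      using q_max p[of "Suc k"] by simp
    show "Fobj Omega q - Fobj Omega (p (Suc k))
        \<le> potential Omega q (snd (p (Suc k))) / 2 - potential Omega q (snd (p k)) / 2" for k
      using optimality_gap_le_potential_increment[OF q q_max _ _ apos bpos, of "p k"] p[of k]
      by (simp add: p_def)
    show "potential Omega q (snd (p k)) / 2 \<le> M / 2" for k
      using M[of k] by simp
  qed
  then have "(\<lambda>k. Fobj Omega (p (Suc k))) \<longlonglongrightarrow> Fobj Omega q"
    by (rule Lim_transform2[OF tendsto_const])
  then show ?thesis
    using q q_max by (auto simp: p_def LIMSEQ_imp_Suc)
qed

end
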